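(* Let $\sigma>0$, $z_0\in\mathbb{R}^N$ and let $(\Psi_P)_{P\ge1}$ with $\Psi_P\in\mathbb{R}^{P\times N}$ be such that, for all $P>1$, $\Psi_P$ is obtained from $\Psi_{P+1}$ by deleting one row. For each $P$ let $\mu_0=\Psi_Pz_0$ and $Y=\mu_0+W$ with $W\sim\mathcal N(0,\sigma^2\mathrm{Id}_P)$. Let $\mathrm{ST}$ be the soft-thresholding ($\mathrm{ST}(y,\lambda)_i=y_i+\lambda$ if $y_i\le-\lambda$, $0$ if $-\lambda<y_i<\lambda$, $y_i-\lambda$ otherwise), with weak $\lambda$-derivative $\partial_\lambda\mathrm{ST}(y,\lambda)_i=0$ if $|y_i|\le\lambda$, $-\operatorname{sign}(y_i)$ otherwise. Define $$\nabla_2\widehat{\mathrm{df}}^{\mathrm{FD}}(y,\lambda,\epsilon)=\frac1\epsilon\sum_{i=1}^P\big(\partial_\lambda\mathrm{ST}(y+\epsilon e_i,\lambda)_i-\partial_\lambda\mathrm{ST}(y,\lambda)_i\big),$$ $$\mathrm{SUGAR}^{\mathrm{FD}}(y,\lambda,\epsilon)=2\,\partial_\lambda\mathrm{ST}(y,\lambda)^*(\mathrm{ST}(y,\lambda)-y)+2\sigma^2\nabla_2\widehat{\mathrm{df}}^{\mathrm{FD}}(y,\lambda,\epsilon),$$ the risk $R(\mu_0,\lambda)=\mathbb{E}_W\|\mathrm{ST}(Y,\lambda)-\mu_0\|^2$ and the degrees of freedom $\mathrm{df}(\mu_0,\lambda)=\sum_{i=1}^P\operatorname{cov}(Y_i,\mathrm{ST}(Y,\lambda)_i)/\sigma^2$.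 Take $\hat\epsilon(P)>0$ with $\lim_{P\to\infty}\hat\epsilon(P)=0$ and $\lim_{P\to\infty}P^{-1}\hat\epsilon(P)^{-1}=0$. Then for any Lebesgue point $\lambda>0$ (i.e. such that for all $(i,P)$, $\lambda\ne|Y_i|$ and $\lambda\ne|(Y+\hat\epsilon(P)e_i)_i|$), $$\operatorname*{plim}_{P\to\infty}\frac1P\Big(\mathrm{SUGAR}^{\mathrm{FD}}(Y,\lambda,\hat\epsilon(P))-\nabla_2R(\mu_0,\lambda)\Big)=0\quad\text{and}\quad\operatorname*{plim}_{P\to\infty}\frac1P\Big(\nabla_2\widehat{\mathrm{df}}^{\mathrm{FD}}(Y,\lambda,\hat\epsilon(P))-\nabla_2\mathrm{df}(\mu_0,\lambda)\Big)=0.$$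
   Context: $(e_i)$ is the canonical basis of $\mathbb{R}^P$; $\nabla_2$ denotes the (weak) derivative with respect to $\lambda$; $\operatorname{plim}$ denotes limit in probability. *)

theory Defs
  imports "HOL-Probability.Probability"
begin

definition ST :: "real \<Rightarrow> real \<Rightarrow> real" where
  "ST y l = (if y \<le> - l then y + l else if y < l then 0 else y - l)"

definition dST :: "real \<Rightarrow> real \<Rightarrow> real" where
  "dST y l = (if \<bar>y\<bar> \<le> l then 0 else - sgn y)"

text \<open>Vectors of R^P are functions on {..<P}.  Finite-difference derivative of df estimate.
  Note (y + eps e_i)_i = y i + eps.\<close>
definition grad_df_FD :: "nat \<Rightarrow> (nat \<Rightarrow> real) \<Rightarrow> real \<Rightarrow> real \<Rightarrow> real" where
  "grad_df_FD P y l eps = (1 / eps) * (\<Sum>i<P. dST (y i + eps) l - dST (y i) l)"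

definition SUGAR_FD :: "nat \<Rightarrow> real \<Rightarrow> (nat \<Rightarrow> real) \<Rightarrow> real \<Rightarrow> real \<Rightarrow> real" where
  "SUGAR_FD P \<sigma> y l eps =
     2 * (\<Sum>i<P. dST (y i) l * (ST (y i) l - y i)) + 2 * \<sigma>\<^sup>2 * grad_df_FD P y l eps"

definition noise :: "nat \<Rightarrow> real \<Rightarrow> (nat \<Rightarrow> real) measure" where
  "noise P \<sigma> = (\<Pi>\<^sub>M i\<in>{..<P}. density lborel (normal_density 0 \<sigma>))"

text \<open>Mean vector mu_0 = Psi_P z_0 (Psi as P x N matrix, entries Psi P i c).\<close>
definition mu0 :: "(nat \<Rightarrow> nat \<Rightarrow> nat \<Rightarrow> real) \<Rightarrow> nat \<Rightarrow> (nat \<Rightarrow> real) \<Rightarrow> nat \<Rightarrow> nat \<Rightarrow> real" where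
  "mu0 \<Psi> N z0 P i = (\<Sum>c<N. \<Psi> P i c * z0 c)"

definition risk :: "nat \<Rightarrow> real \<Rightarrow> (nat \<Rightarrow> real) \<Rightarrow> real \<Rightarrow> real" where
  "risk P \<sigma> \<mu> l = (\<integral>w. (\<Sum>i<P. (ST (\<mu> i + w i) l - \<mu> i)\<^sup>2) \<partial>noise P \<sigma>)"

definition cov :: "'a measure \<Rightarrow> ('a \<Rightarrow> real) \<Rightarrow> ('a \<Rightarrow> real) \<Rightarrow> real" where
  "cov M X Z = (\<integral>w. (X w - (\<integral>v. X v \<partial>M)) * (Z w - (\<integral>v. Z v \<partial>M)) \<partial>M)"

definition dof :: "nat \<Rightarrow> real \<Rightarrow> (nat \<Rightarrow> real) \<Rightarrow> real \<Rightarrow> real" where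
  "dof P \<sigma> \<mu> l = (\<Sum>i<P. cov (noise P \<sigma>) (\<lambda>w. \<mu> i + w i) (\<lambda>w. ST (\<mu> i + w i) l)) / \<sigma>\<^sup>2"

definition plim_zero :: "(nat \<Rightarrow> 'a measure) \<Rightarrow> (nat \<Rightarrow> 'a \<Rightarrow> real) \<Rightarrow> bool" where
  "plim_zero M X \<longleftrightarrow>
     (\<forall>e>0. (\<lambda>P. measure (M P) {w \<in> space (M P). \<bar>X P w\<bar> > e}) \<longlonglongrightarrow> 0)"

end

theory Submission
  imports Defs "HOL-Real_Asymp.Real_Asymp"
begin

text \<open>Dividing by \<open>P\<close>, both errors split into a deterministic bias and an average of
  independent centred terms, one per coordinate of the noise.  Gaussian integration by parts gives
  \<open>\<nabla>\<^sub>2df = - \<Sum>\<^sub>i (\<phi>(\<lambda> - \<mu>\<^sub>i) + \<phi>(- \<lambda> - \<mu>\<^sub>i))\<close>, while the finite difference of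
  \<open>\<partial>\<^sub>\<lambda>ST\<close> is minus the indicator of two intervals of length \<open>\<epsilon>\<close> next to the kinks; their
  Gaussian mass is \<open>\<epsilon> \<phi>(kink) + O(\<epsilon>\<^sup>2)\<close>, so the bias per coordinate is \<open>O(\<epsilon>)\<close>.  The
  fluctuation is controlled by Chebyshev's inequality: its variance is \<open>O(P)\<close> for the bounded
  term \<open>\<partial>\<^sub>\<lambda>ST\<^sup>*(ST - Y)\<close> and \<open>O(P / \<epsilon>)\<close> for the difference quotient.  Hence both errors vanish in
  probability when \<open>\<epsilon> \<rightarrow> 0\<close> and \<open>P \<epsilon> \<rightarrow> \<infinity>\<close>.\<close>

section \<open>Independent coordinates\<close>

lemma (in prob_space) product_prob_space_const: "product_prob_space (\<lambda>_. M)"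
  by (intro product_prob_space.intro product_sigma_finite.intro product_prob_space_axioms.intro
      sigma_finite_measure_axioms prob_space_axioms)

lemma (in prob_space) prob_space_PiM_const: "prob_space (\<Pi>\<^sub>M i\<in>I. M)"
  by (rule prob_space_PiM) (rule prob_space_axioms)

lemma (in prob_space) distr_PiM_const_component:
  "i \<in> I \<Longrightarrow> distr (\<Pi>\<^sub>M i\<in>I. M) M (\<lambda>w. w i) = M"
  by (rule distr_PiM_component) (auto intro: prob_space_axioms)

lemma (in prob_space) integral_PiM_component:
  fixes f :: "'a \<Rightarrow> real"
  assumes "i \<in> I" "f \<in> borel_measurable M"
  shows "(\<integral>w. f (w i) \<partial>(\<Pi>\<^sub>M i\<in>I. M)) = expectation f"
  using integral_distr[OF measurable_component_singleton[OF assms(1)] assms(2)]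
  by (simp add: distr_PiM_const_component[OF assms(1)])

lemma (in prob_space) integrable_PiM_component_iff:
  fixes f :: "'a \<Rightarrow> real"
  assumes "i \<in> I" "f \<in> borel_measurable M"
  shows "integrable (\<Pi>\<^sub>M i\<in>I. M) (\<lambda>w. f (w i)) \<longleftrightarrow> integrable M f"
  using integrable_distr_eq[OF measurable_component_singleton[OF assms(1)] assms(2)]
  by (simp add: distr_PiM_const_component[OF assms(1)])

lemma (in prob_space) integral_PiM_two_components:
  fixes f g :: "'a \<Rightarrow> real"
  assumes I: "finite I" "i \<in> I" "j \<in> I" "i \<noteq> j" and fg: "integrable M f" "integrable M g"
  shows "(\<integral>w. f (w i) * g (w j) \<partial>(\<Pi>\<^sub>M i\<in>I. M)) = expectation f * expectation g"
proof -
  interpret P: product_prob_space "\<lambda>_. M" I by (rule product_prob_space_const)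
  define h where "h k = (if k = i then f else if k = j then g else (\<lambda>_. 1))" for k
  have "(\<Prod>k\<in>I. h k (w k)) = (\<Prod>k\<in>{i, j}. h k (w k))" for w
    by (rule prod.mono_neutral_right) (use I in \<open>auto simp: h_def\<close>)
  then have "(\<integral>w. f (w i) * g (w j) \<partial>(\<Pi>\<^sub>M i\<in>I. M)) = (\<integral>w. (\<Prod>k\<in>I. h k (w k)) \<partial>(\<Pi>\<^sub>M i\<in>I. M))"
    using I by (simp add: h_def)
  also have "\<dots> = (\<Prod>k\<in>I. integral\<^sup>L M (h k))"
    by (rule P.product_integral_prod) (use I fg in \<open>auto simp: h_def\<close>)
  also have "\<dots> = (\<Prod>k\<in>{i, j}. integral\<^sup>L M (h k))"
    by (rule prod.mono_neutral_right) (use I in \<open>auto simp: h_def prob_space\<close>)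
  finally show ?thesis using I by (simp add: h_def)
qed

lemma (in prob_space) integrable_bounded:
  fixes f :: "'a \<Rightarrow> real"
  assumes "f \<in> borel_measurable M" "\<And>x. x \<in> space M \<Longrightarrow> \<bar>f x\<bar> \<le> B"
  shows "integrable M f"
  by (rule integrable_const_bound[where B=B]) (use assms in \<open>auto intro!: AE_I2\<close>)

lemma (in prob_space) integral_PiM_sum_square:
  fixes Z :: "'i \<Rightarrow> 'a \<Rightarrow> real"
  assumes I: "finite I" and meas: "\<And>i. i \<in> I \<Longrightarrow> Z i \<in> borel_measurable M"
    and bnd: "\<And>i x. i \<in> I \<Longrightarrow> x \<in> space M \<Longrightarrow> \<bar>Z i x\<bar> \<le> B"
    and centered: "\<And>i. i \<in> I \<Longrightarrow> expectation (Z i) = 0"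
  shows "integrable (\<Pi>\<^sub>M i\<in>I. M) (\<lambda>w. (\<Sum>i\<in>I. Z i (w i))\<^sup>2)"
    and "(\<integral>w. (\<Sum>i\<in>I. Z i (w i))\<^sup>2 \<partial>(\<Pi>\<^sub>M i\<in>I. M)) = (\<Sum>i\<in>I. expectation (\<lambda>x. (Z i x)\<^sup>2))"
proof -
  interpret Pi: prob_space "\<Pi>\<^sub>M i\<in>I. M" by (rule prob_space_PiM_const)
  have intZZ: "integrable (\<Pi>\<^sub>M i\<in>I. M) (\<lambda>w. Z i (w i) * Z j (w j))" if "i \<in> I" "j \<in> I" for i j
  proof (rule Pi.integrable_bounded[where B="B * B"])
    show "(\<lambda>w. Z i (w i) * Z j (w j)) \<in> borel_measurable (\<Pi>\<^sub>M i\<in>I. M)"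
      using that meas by measurable
    fix w assume "w \<in> space (\<Pi>\<^sub>M i\<in>I. M)"
    then have "\<bar>Z i (w i)\<bar> \<le> B" "\<bar>Z j (w j)\<bar> \<le> B"
      using that by (auto intro!: bnd simp: space_PiM)
    then show "\<bar>Z i (w i) * Z j (w j)\<bar> \<le> B * B"
      unfolding abs_mult by (intro mult_mono) auto
  qed
  show "integrable (\<Pi>\<^sub>M i\<in>I. M) (\<lambda>w. (\<Sum>i\<in>I. Z i (w i))\<^sup>2)"
    unfolding power2_eq_square sum_product by (intro Bochner_Integration.integrable_sum intZZ)
  have "(\<integral>w. (\<Sum>i\<in>I. Z i (w i))\<^sup>2 \<partial>(\<Pi>\<^sub>M i\<in>I. M))
      = (\<Sum>i\<in>I. \<Sum>j\<in>I. \<integral>w. Z i (w i) * Z j (w j) \<partial>(\<Pi>\<^sub>M i\<in>I. M))"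
    unfolding power2_eq_square sum_product using intZZ
    by (simp add: Bochner_Integration.integral_sum Bochner_Integration.integrable_sum)
  also have "\<dots> = (\<Sum>i\<in>I. expectation (\<lambda>x. (Z i x)\<^sup>2))"
  proof (rule sum.cong[OF refl])
    fix i assume i: "i \<in> I"
    have diag: "(\<integral>w. Z i (w i) * Z i (w i) \<partial>(\<Pi>\<^sub>M i\<in>I. M)) = expectation (\<lambda>x. (Z i x)\<^sup>2)"
      unfolding power2_eq_square using meas[OF i] by (intro integral_PiM_component[OF i]) measurable
    have "integrable M (Z j)" if "j \<in> I" for j
      using that meas bnd by (intro integrable_bounded)
    then have "(\<Sum>j\<in>I. \<integral>w. Z i (w i) * Z j (w j) \<partial>(\<Pi>\<^sub>M i\<in>I. M))
        = (\<Sum>j\<in>I. if j = i then expectation (\<lambda>x. (Z i x)\<^sup>2) else 0)"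
      using i I centered diag by (intro sum.cong) (auto simp: integral_PiM_two_components)
    then show "(\<Sum>j\<in>I. \<integral>w. Z i (w i) * Z j (w j) \<partial>(\<Pi>\<^sub>M i\<in>I. M)) = expectation (\<lambda>x. (Z i x)\<^sup>2)"
      using i I by simp
  qed
  finally show "(\<integral>w. (\<Sum>i\<in>I. Z i (w i))\<^sup>2 \<partial>(\<Pi>\<^sub>M i\<in>I. M)) = (\<Sum>i\<in>I. expectation (\<lambda>x. (Z i x)\<^sup>2))" .
qed

lemma (in prob_space) PiM_sum_deviation_le:
  fixes F :: "'i \<Rightarrow> 'a \<Rightarrow> real"
  assumes I: "finite I" and meas: "\<And>i. i \<in> I \<Longrightarrow> F i \<in> borel_measurable M"
    and bnd: "\<And>i x. i \<in> I \<Longrightarrow> x \<in> space M \<Longrightarrow> \<bar>F i x\<bar> \<le> B" and c: "c > 0"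
  shows "measure (\<Pi>\<^sub>M i\<in>I. M)
      {w \<in> space (\<Pi>\<^sub>M i\<in>I. M). c \<le> \<bar>\<Sum>i\<in>I. F i (w i) - expectation (F i)\<bar>}
    \<le> (\<Sum>i\<in>I. expectation (\<lambda>x. (F i x)\<^sup>2)) / c\<^sup>2"
proof -
  define Z where "Z i x = F i x - expectation (F i)" for i x
  have intF: "integrable M (F i)" if "i \<in> I" for i
    using that meas bnd by (intro integrable_bounded)
  have Zb: "\<bar>Z i x\<bar> \<le> 2 * B" if "i \<in> I" "x \<in> space M" for i x
  proof -
    have "\<bar>expectation (F i)\<bar> \<le> B"
      using bnd[OF that(1)] intF[OF that(1)]
      by (auto intro!: integral_ge_const integral_le_const AE_I2 simp: abs_le_iff minus_le_iff)
    then show ?thesis unfolding Z_def using bnd[OF that] by linarith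
  qed
  have Z_moment: "expectation (\<lambda>x. (Z i x)\<^sup>2) \<le> expectation (\<lambda>x. (F i x)\<^sup>2)" if "i \<in> I" for i
  proof -
    have "(F i x)\<^sup>2 \<le> B\<^sup>2" if "x \<in> space M" for x
      using bnd[OF \<open>i \<in> I\<close> that] by (metis abs_ge_self abs_le_square_iff order_trans)
    then have "integrable M (\<lambda>x. (F i x)\<^sup>2)"
      using meas[OF that] by (intro integrable_bounded[where B="B\<^sup>2"]) auto
    then show ?thesis using variance_eq[OF intF[OF that]] unfolding Z_def by simp
  qed
  have Zm: "Z i \<in> borel_measurable M" if "i \<in> I" for i
    unfolding Z_def using meas[OF that] by measurable
  have EZ: "expectation (Z i) = 0" if "i \<in> I" for i
    unfolding Z_def using intF[OF that] by (simp add: prob_space)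
  note sum_square = integral_PiM_sum_square[OF I Zm Zb EZ]
  have "{w \<in> space (\<Pi>\<^sub>M i\<in>I. M). c \<le> \<bar>\<Sum>i\<in>I. F i (w i) - expectation (F i)\<bar>}
      = {w \<in> space (\<Pi>\<^sub>M i\<in>I. M). c\<^sup>2 \<le> (\<Sum>i\<in>I. Z i (w i))\<^sup>2}"
    using c by (auto simp: Z_def abs_le_square_iff[symmetric])
  also have "measure (\<Pi>\<^sub>M i\<in>I. M) \<dots> \<le> (\<integral>w. (\<Sum>i\<in>I. Z i (w i))\<^sup>2 \<partial>(\<Pi>\<^sub>M i\<in>I. M)) / c\<^sup>2"
    using c sum_square(1) by (intro integral_Markov_inequality_measure) auto
  also have "\<dots> = (\<Sum>i\<in>I. expectation (\<lambda>x. (Z i x)\<^sup>2)) / c\<^sup>2"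
    using sum_square(2) by simp
  also have "\<dots> \<le> (\<Sum>i\<in>I. expectation (\<lambda>x. (F i x)\<^sup>2)) / c\<^sup>2"
    by (intro divide_right_mono sum_mono Z_moment) auto
  finally show ?thesis .
qed

section \<open>Convergence in probability\<close>

lemma plim_zero_const:
  assumes "c \<longlonglongrightarrow> 0"
  shows "plim_zero M (\<lambda>P w. c P)"
  unfolding plim_zero_def
proof (intro allI impI)
  fix e :: real assume "e > 0"
  then have "eventually (\<lambda>P. \<bar>c P\<bar> < e) sequentially"
    using assms by (auto dest: tendstoD simp: dist_real_def)
  then show "(\<lambda>P. measure (M P) {w \<in> space (M P). e < \<bar>c P\<bar>}) \<longlonglongrightarrow> 0"
    by (intro tendsto_eventually) (auto elim!: eventually_mono)
qed

lemma plim_zero_cmult: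
  assumes "plim_zero M X"
  shows "plim_zero M (\<lambda>P w. k * X P w)"
proof (cases "k = 0")
  case True
  then show ?thesis by (simp add: plim_zero_def)
next
  case False
  show ?thesis
    unfolding plim_zero_def
  proof (intro allI impI)
    fix e :: real assume "e > 0"
    then have "(\<lambda>P. measure (M P) {w \<in> space (M P). e / \<bar>k\<bar> < \<bar>X P w\<bar>}) \<longlonglongrightarrow> 0"
      using assms False by (simp add: plim_zero_def)
    moreover have "e / \<bar>k\<bar> < \<bar>x\<bar> \<longleftrightarrow> e < \<bar>k * x\<bar>" for x
      using False by (simp add: divide_less_eq abs_mult mult.commute)
    ultimately show "(\<lambda>P. measure (M P) {w \<in> space (M P). e < \<bar>k * X P w\<bar>}) \<longlonglongrightarrow> 0"
      by simp
  qed
qed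

lemma plim_zero_add:
  assumes "\<And>P. finite_measure (M P)"
    and "\<And>P. X P \<in> borel_measurable (M P)" "\<And>P. Y P \<in> borel_measurable (M P)"
    and "plim_zero M X" "plim_zero M Y"
  shows "plim_zero M (\<lambda>P w. X P w + Y P w)"
  unfolding plim_zero_def
proof (intro allI impI)
  fix e :: real assume e: "e > 0"
  let ?A = "\<lambda>P. {w \<in> space (M P). e / 2 < \<bar>X P w\<bar>}"
  let ?B = "\<lambda>P. {w \<in> space (M P). e / 2 < \<bar>Y P w\<bar>}"
  have AB: "?A P \<in> sets (M P)" "?B P \<in> sets (M P)" for P
    using assms(2,3)[of P] by (auto intro!: pred_intros_logic borel_measurable_less[unfolded pred_def])
  have le: "measure (M P) {w \<in> space (M P). e < \<bar>X P w + Y P w\<bar>}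
      \<le> measure (M P) (?A P) + measure (M P) (?B P)" for P
  proof -
    interpret finite_measure "M P" by (rule assms(1))
    have "{w \<in> space (M P). e < \<bar>X P w + Y P w\<bar>} \<subseteq> ?A P \<union> ?B P"
      using abs_triangle_ineq by fastforce
    then have "measure (M P) {w \<in> space (M P). e < \<bar>X P w + Y P w\<bar>} \<le> measure (M P) (?A P \<union> ?B P)"
      using AB by (intro finite_measure_mono) auto
    also have "\<dots> \<le> measure (M P) (?A P) + measure (M P) (?B P)"
      using AB by (rule measure_Un_le)
    finally show ?thesis .
  qed
  have "e / 2 > 0" using e by simp
  then have "(\<lambda>P. measure (M P) (?A P)) \<longlonglongrightarrow> 0" "(\<lambda>P. measure (M P) (?B P)) \<longlonglongrightarrow> 0"
    using assms(4,5) unfolding plim_zero_def by (metis (no_types))+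
  from tendsto_add[OF this] have lim: "(\<lambda>P. measure (M P) (?A P) + measure (M P) (?B P)) \<longlonglongrightarrow> 0"
    by simp
  show "(\<lambda>P. measure (M P) {w \<in> space (M P). e < \<bar>X P w + Y P w\<bar>}) \<longlonglongrightarrow> 0"
    by (rule tendsto_sandwich[OF _ _ tendsto_const lim]) (intro always_eventually allI measure_nonneg le)+
qed

section \<open>Soft thresholding\<close>

lemma ST_measurable[measurable (raw)]:
  "f \<in> borel_measurable M \<Longrightarrow> (\<lambda>x. ST (f x) t) \<in> borel_measurable M"
proof -
  have "(\<lambda>y. ST y t) \<in> borel_measurable borel" unfolding ST_def by measurable
  then show "f \<in> borel_measurable M \<Longrightarrow> (\<lambda>x. ST (f x) t) \<in> borel_measurable M"
    using measurable_compose by blast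
qed

lemma dST_measurable[measurable (raw)]:
  "f \<in> borel_measurable M \<Longrightarrow> (\<lambda>x. dST (f x) t) \<in> borel_measurable M"
proof -
  have "(\<lambda>y. dST y t) \<in> borel_measurable borel" unfolding dST_def by measurable
  then show "f \<in> borel_measurable M \<Longrightarrow> (\<lambda>x. dST (f x) t) \<in> borel_measurable M"
    using measurable_compose by blast
qed

lemma abs_dST_le_1: "\<bar>dST y l\<bar> \<le> 1"
  unfolding dST_def by (auto simp: sgn_if)

lemma abs_ST_diff_le: "\<bar>ST y t - y\<bar> \<le> \<bar>t\<bar>"
  unfolding ST_def by (auto simp: abs_if)

lemma abs_ST_diff_threshold_le: "0 \<le> t \<Longrightarrow> 0 \<le> s \<Longrightarrow> \<bar>ST y t - ST y s\<bar> \<le> \<bar>t - s\<bar>"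
  unfolding ST_def by (auto simp: abs_if)

lemma abs_dST_mult_ST_diff_le: "0 \<le> l \<Longrightarrow> \<bar>dST y l * (ST y l - y)\<bar> \<le> l"
  unfolding dST_def ST_def by (auto simp: sgn_if abs_if)

lemma ST_has_real_derivative_threshold:
  assumes "l > 0" "\<bar>y\<bar> \<noteq> l"
  shows "((\<lambda>t. ST y t) has_real_derivative dST y l) (at l)"
proof -
  define S where "S = (if \<bar>y\<bar> < l then {\<bar>y\<bar><..} else {0<..<\<bar>y\<bar>})"
  have "open S" "l \<in> S" using assms by (auto simp: S_def)
  then have "eventually (\<lambda>t. t \<in> S) (nhds l)" by (rule eventually_nhds_in_open)
  then have "eventually (\<lambda>t. ST y t = (if \<bar>y\<bar> < l then 0 else y - sgn y * t)) (nhds l)"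
    by eventually_elim (auto simp: S_def ST_def sgn_if split: if_splits)
  moreover have "((\<lambda>t. (if \<bar>y\<bar> < l then 0 else y - sgn y * t))
      has_real_derivative dST y l) (at l)"
    using assms by (cases "\<bar>y\<bar> < l") (auto intro!: derivative_eq_intros simp: dST_def)
  ultimately show ?thesis
    by (subst DERIV_cong_ev[OF refl _ refl]) (auto elim: eventually_mono)
qed

lemma dST_forward_difference:
  assumes "0 < \<epsilon>" "\<epsilon> < 2 * l"
  shows "dST (\<mu> + x + \<epsilon>) l - dST (\<mu> + x) l
    = - (indicator {l - \<mu> - \<epsilon><..l - \<mu>} x + indicator {- l - \<mu> - \<epsilon>..<- l - \<mu>} x)"
  using assms unfolding dST_def by (auto simp: sgn_if split: split_indicator)

section \<open>The centred normal density\<close>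

context
  fixes \<sigma> :: real
  assumes \<sigma>: "0 < \<sigma>"
begin

lemma normal_density_has_real_derivative:
  "(normal_density 0 \<sigma> has_real_derivative (- x / \<sigma>\<^sup>2 * normal_density 0 \<sigma> x)) (at x)"
  unfolding normal_density_def using \<sigma>
  by (auto intro!: derivative_eq_intros simp: field_simps power2_eq_square)

lemma normal_density_le: "normal_density 0 \<sigma> x \<le> 1 / sqrt (2 * pi * \<sigma>\<^sup>2)"
  unfolding normal_density_def using \<sigma> by (auto simp: field_simps)

lemma abs_mult_exp_neg_square_le: "\<bar>x\<bar> * exp (- x\<^sup>2 / (2 * \<sigma>\<^sup>2)) \<le> \<sigma>"
proof -
  have "\<bar>x\<bar> \<le> \<sigma> * (1 + x\<^sup>2 / (2 * \<sigma>\<^sup>2))"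
  proof -
    have "\<sigma> * (1 + x\<^sup>2 / (2 * \<sigma>\<^sup>2)) - \<bar>x\<bar> = ((\<bar>x\<bar> - \<sigma>)\<^sup>2 + \<sigma>\<^sup>2) / (2 * \<sigma>)"
      using \<sigma> by (simp add: field_simps power2_eq_square)
    also have "\<dots> \<ge> 0" using \<sigma> by simp
    finally show ?thesis by simp
  qed
  also have "\<dots> \<le> \<sigma> * exp (x\<^sup>2 / (2 * \<sigma>\<^sup>2))"
    using \<sigma> by (intro mult_left_mono exp_ge_add_one_self) auto
  finally have "\<bar>x\<bar> * exp (- x\<^sup>2 / (2 * \<sigma>\<^sup>2)) \<le> \<sigma> * exp (x\<^sup>2 / (2 * \<sigma>\<^sup>2)) * exp (- x\<^sup>2 / (2 * \<sigma>\<^sup>2))"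
    by (simp add: mult_right_mono)
  also have "\<dots> = \<sigma>" by (simp add: mult.assoc flip: exp_add)
  finally show ?thesis .
qed

lemma normal_density_lipschitz:
  "\<bar>normal_density 0 \<sigma> x - normal_density 0 \<sigma> y\<bar> \<le> \<bar>x - y\<bar> / (sqrt (2 * pi * \<sigma>\<^sup>2) * \<sigma>)"
proof -
  have "norm (normal_density 0 \<sigma> x - normal_density 0 \<sigma> y) \<le> 1 / (sqrt (2 * pi * \<sigma>\<^sup>2) * \<sigma>) * norm (x - y)"
  proof (rule field_differentiable_bound[where S=UNIV and f'="\<lambda>x. - x / \<sigma>\<^sup>2 * normal_density 0 \<sigma> x"])
    fix z :: real
    show "(normal_density 0 \<sigma> has_field_derivative - z / \<sigma>\<^sup>2 * normal_density 0 \<sigma> z) (at z within UNIV)"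
      by (rule normal_density_has_real_derivative)
    have "norm (- z / \<sigma>\<^sup>2 * normal_density 0 \<sigma> z)
        = 1 / (sqrt (2 * pi * \<sigma>\<^sup>2) * \<sigma>\<^sup>2) * (\<bar>z\<bar> * exp (- z\<^sup>2 / (2 * \<sigma>\<^sup>2)))"
      unfolding normal_density_def by (simp add: abs_mult field_simps)
    also have "\<dots> \<le> 1 / (sqrt (2 * pi * \<sigma>\<^sup>2) * \<sigma>\<^sup>2) * \<sigma>"
      by (intro mult_left_mono abs_mult_exp_neg_square_le) auto
    also have "\<dots> = 1 / (sqrt (2 * pi * \<sigma>\<^sup>2) * \<sigma>)" using \<sigma> by (simp add: power2_eq_square)
    finally show "norm (- z / \<sigma>\<^sup>2 * normal_density 0 \<sigma> z) \<le> 1 / (sqrt (2 * pi * \<sigma>\<^sup>2) * \<sigma>)" .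
  qed auto
  then show ?thesis by simp
qed

lemma normal_density_mult_id_antiderivative:
  "((\<lambda>x. - \<sigma>\<^sup>2 * normal_density 0 \<sigma> x) has_real_derivative normal_density 0 \<sigma> x * x) (at x)"
  using normal_density_has_real_derivative[of x] \<sigma>
  by (auto intro!: derivative_eq_intros simp: field_simps)

lemma integral_normal_density_mult_interval:
  assumes "a \<le> c"
  shows "(\<integral>x. indicator {a..c} x *\<^sub>R (normal_density 0 \<sigma> x * x) \<partial>lborel)
    = \<sigma>\<^sup>2 * normal_density 0 \<sigma> a - \<sigma>\<^sup>2 * normal_density 0 \<sigma> c"
proof -
  have "(\<integral>x. indicator {a..c} x *\<^sub>R (normal_density 0 \<sigma> x * x) \<partial>lborel)
      = - \<sigma>\<^sup>2 * normal_density 0 \<sigma> c - - \<sigma>\<^sup>2 * normal_density 0 \<sigma> a"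
  proof (rule integral_FTC_atLeastAtMost[OF assms])
    show "((\<lambda>x. - \<sigma>\<^sup>2 * normal_density 0 \<sigma> x) has_vector_derivative normal_density 0 \<sigma> x * x) (at x within {a..c})" for x
      using normal_density_mult_id_antiderivative[of x]
      by (simp add: has_real_derivative_iff_has_vector_derivative has_vector_derivative_at_within)
    show "continuous_on {a..c} (\<lambda>x. normal_density 0 \<sigma> x * x)"
      unfolding normal_density_def using \<sigma> by (intro continuous_intros) auto
  qed
  then show ?thesis by simp
qed

lemma has_bochner_integral_normal_density_mult_tail:
  assumes "0 \<le> c"
  shows "has_bochner_integral lborel (\<lambda>x. normal_density 0 \<sigma> x * x * indicator {c..} x)
    (\<sigma>\<^sup>2 * normal_density 0 \<sigma> c)"
proof (rule has_bochner_integral_nn_integral)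
  have "(\<integral>\<^sup>+x. ennreal (normal_density 0 \<sigma> x * x) * indicator {c..} x \<partial>lborel)
      = 0 - - \<sigma>\<^sup>2 * normal_density 0 \<sigma> c"
  proof (rule nn_integral_FTC_atLeast)
    show "((\<lambda>x. - \<sigma>\<^sup>2 * normal_density 0 \<sigma> x) \<longlongrightarrow> 0) at_top"
      unfolding normal_density_def using \<sigma> by real_asymp
  qed (use assms normal_density_mult_id_antiderivative in auto)
  moreover have "(\<lambda>x. ennreal (normal_density 0 \<sigma> x * x * indicator {c..} x))
      = (\<lambda>x. ennreal (normal_density 0 \<sigma> x * x) * indicator {c..} x)"
    by (auto split: split_indicator)
  ultimately show "(\<integral>\<^sup>+x. ennreal (normal_density 0 \<sigma> x * x * indicator {c..} x) \<partial>lborel)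
      = ennreal (\<sigma>\<^sup>2 * normal_density 0 \<sigma> c)"
    by simp
qed (use assms \<sigma> in \<open>auto split: split_indicator\<close>)

lemma integral_normal_density_mult_upper_tail:
  "(\<integral>x. normal_density 0 \<sigma> x * x * indicator {a<..} x \<partial>lborel) = \<sigma>\<^sup>2 * normal_density 0 \<sigma> a"
proof -
  define c where "c = \<bar>a\<bar>"
  have ac: "a \<le> c" "0 \<le> c" unfolding c_def by auto
  note tail = has_bochner_integral_normal_density_mult_tail[OF ac(2)]
  have "AE x in lborel. x \<noteq> a \<and> x \<noteq> c"
    using AE_lborel_singleton[of a] AE_lborel_singleton[of c] by eventually_elim auto
  then have "AE x in lborel. normal_density 0 \<sigma> x * x * indicator {a<..} x
      = indicator {a..c} x *\<^sub>R (normal_density 0 \<sigma> x * x) + normal_density 0 \<sigma> x * x * indicator {c..} x"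
    by eventually_elim (use ac in \<open>auto split: split_indicator\<close>)
  then have "(\<integral>x. normal_density 0 \<sigma> x * x * indicator {a<..} x \<partial>lborel)
      = (\<integral>x. indicator {a..c} x *\<^sub>R (normal_density 0 \<sigma> x * x)
          + normal_density 0 \<sigma> x * x * indicator {c..} x \<partial>lborel)"
    by (rule integral_cong_AE[rotated 2]) measurable
  also have "\<dots> = (\<sigma>\<^sup>2 * normal_density 0 \<sigma> a - \<sigma>\<^sup>2 * normal_density 0 \<sigma> c) + \<sigma>\<^sup>2 * normal_density 0 \<sigma> c"
    using integrable_mult_indicator[OF _ integrable_normal_moment_nz_1[OF \<sigma>], of "{a..c}" 0]
      integrable.intros[OF tail] has_bochner_integral_integral_eq[OF tail]
      integral_normal_density_mult_interval[OF ac(1)]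
    by (subst Bochner_Integration.integral_add) auto
  finally show ?thesis by simp
qed

lemma integral_normal_density_mult_lower_tail:
  "(\<integral>x. normal_density 0 \<sigma> x * x * indicator {..<b} x \<partial>lborel) = - (\<sigma>\<^sup>2 * normal_density 0 \<sigma> b)"
proof -
  have "AE x in lborel. x \<noteq> b" by (rule AE_lborel_singleton)
  then have "(\<integral>x. normal_density 0 \<sigma> x * x * indicator {..<b} x \<partial>lborel)
      = (\<integral>x. normal_density 0 \<sigma> x * x - normal_density 0 \<sigma> x * x * indicator {b<..} x \<partial>lborel)"
    by (intro integral_cong_AE) (auto split: split_indicator elim!: eventually_mono)
  also have "\<dots> = 0 - \<sigma>\<^sup>2 * normal_density 0 \<sigma> b"
    using integral_normal_moment_nz_1[OF \<sigma>, of 0] integrable_normal_moment_nz_1[OF \<sigma>, of 0]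
    by (subst Bochner_Integration.integral_diff)
       (auto intro!: integrable_real_mult_indicator simp: integral_normal_density_mult_upper_tail)
  finally show ?thesis by simp
qed

lemma integral_normal_density_indicator_le:
  assumes S: "S \<in> sets borel" "emeasure lborel S = ennreal e" "0 \<le> e"
  shows "(\<integral>x. normal_density 0 \<sigma> x * indicator S x \<partial>lborel) \<le> e / sqrt (2 * pi * \<sigma>\<^sup>2)"
proof -
  have "(\<integral>x. normal_density 0 \<sigma> x * indicator S x \<partial>lborel)
      \<le> (\<integral>x. 1 / sqrt (2 * pi * \<sigma>\<^sup>2) * indicator S x \<partial>lborel)"
    using S normal_density_le by (intro integral_mono)
      (auto intro!: integrable_real_mult_indicator integrable_normal_density[OF \<sigma>]
        simp: integrable_indicator_iff split: split_indicator)
  also have "\<dots> = e / sqrt (2 * pi * \<sigma>\<^sup>2)" using S by (simp add: measure_def)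
  finally show ?thesis .
qed

lemma integral_normal_density_indicator_approx:
  assumes S: "S \<in> sets borel" "S \<subseteq> {c - e..c}" "emeasure lborel S = ennreal e" "0 \<le> e"
  shows "\<bar>(\<integral>x. normal_density 0 \<sigma> x * indicator S x \<partial>lborel) - e * normal_density 0 \<sigma> c\<bar>
    \<le> e\<^sup>2 / (sqrt (2 * pi * \<sigma>\<^sup>2) * \<sigma>)"
proof -
  define L where "L = 1 / (sqrt (2 * pi * \<sigma>\<^sup>2) * \<sigma>)"
  have iS: "integrable lborel (indicator S :: real \<Rightarrow> real)"
    using S by (simp add: integrable_indicator_iff)
  have iP: "integrable lborel (\<lambda>x. normal_density 0 \<sigma> x * indicator S x)"
    using S by (intro integrable_real_mult_indicator integrable_normal_density[OF \<sigma>]) simp_all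
  have "(\<integral>x. normal_density 0 \<sigma> x * indicator S x \<partial>lborel) - e * normal_density 0 \<sigma> c
      = (\<integral>x. (normal_density 0 \<sigma> x - normal_density 0 \<sigma> c) * indicator S x \<partial>lborel)"
    using iS iP S by (simp add: left_diff_distrib Bochner_Integration.integral_diff measure_def)
  also have "\<bar>\<dots>\<bar> \<le> (\<integral>x. L * e * indicator S x \<partial>lborel)"
  proof (rule integral_abs_bound_integral)
    show "integrable lborel (\<lambda>x. (normal_density 0 \<sigma> x - normal_density 0 \<sigma> c) * indicator S x)"
      using iS iP by (simp add: left_diff_distrib)
    show "integrable lborel (\<lambda>x. L * e * indicator S x)" using iS by simp
    fix x
    have "\<bar>normal_density 0 \<sigma> x - normal_density 0 \<sigma> c\<bar> \<le> L * e" if "x \<in> S"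
    proof -
      have K: "0 < sqrt (2 * pi * \<sigma>\<^sup>2) * \<sigma>" using \<sigma> by simp
      have "\<bar>normal_density 0 \<sigma> x - normal_density 0 \<sigma> c\<bar> \<le> \<bar>x - c\<bar> / (sqrt (2 * pi * \<sigma>\<^sup>2) * \<sigma>)"
        by (rule normal_density_lipschitz)
      also have "\<dots> \<le> e / (sqrt (2 * pi * \<sigma>\<^sup>2) * \<sigma>)"
        using that S K by (intro divide_right_mono) auto
      finally show ?thesis by (simp add: L_def)
    qed
    then show "\<bar>(normal_density 0 \<sigma> x - normal_density 0 \<sigma> c) * indicator S x\<bar> \<le> L * e * indicator S x"
      by (auto split: split_indicator)
  qed
  also have "\<dots> = e\<^sup>2 / (sqrt (2 * pi * \<sigma>\<^sup>2) * \<sigma>)"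
    using S by (simp add: L_def measure_def power2_eq_square)
  finally show ?thesis .
qed

end

section \<open>Differentiation under the integral sign\<close>

lemma integral_dominated_convergence_at:
  fixes s :: "real \<Rightarrow> 'a \<Rightarrow> real"
  assumes "f \<in> borel_measurable M" "\<And>t. s t \<in> borel_measurable M" "integrable M w"
    and lim: "AE x in M. ((\<lambda>t. s t x) \<longlongrightarrow> f x) (at l)"
    and bound: "eventually (\<lambda>t. AE x in M. \<bar>s t x\<bar> \<le> w x) (at l)"
  shows "((\<lambda>t. integral\<^sup>L M (s t)) \<longlongrightarrow> integral\<^sup>L M f) (at l)"
  unfolding tendsto_at_iff_sequentially comp_def
proof (intro allI impI)
  fix X :: "nat \<Rightarrow> real" assume "\<forall>i. X i \<in> UNIV - {l}" "X \<longlonglongrightarrow> l"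
  then have X: "filterlim X (at l) sequentially"
    by (simp add: filterlim_at)
  from filterlim_iff[THEN iffD1, OF X, rule_format, OF bound]
  obtain N where w: "\<And>n. N \<le> n \<Longrightarrow> AE x in M. \<bar>s (X n) x\<bar> \<le> w x"
    by (auto simp: eventually_sequentially)
  show "(\<lambda>n. integral\<^sup>L M (s (X n))) \<longlonglongrightarrow> integral\<^sup>L M f"
  proof (rule LIMSEQ_offset, rule integral_dominated_convergence)
    show "AE x in M. norm (s (X (n + N)) x) \<le> w x" for n
      using w[of "n + N"] by simp
    show "AE x in M. (\<lambda>n. s (X (n + N)) x) \<longlonglongrightarrow> f x"
      using lim by eventually_elim (intro LIMSEQ_ignore_initial_segment filterlim_compose[OF _ X])
  qed (use assms in auto)
qed

lemma has_real_derivative_integral: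
  fixes f :: "real \<Rightarrow> 'a \<Rightarrow> real"
  assumes meas: "\<And>t. f t \<in> borel_measurable M" "f' \<in> borel_measurable M"
    and int: "\<And>t. \<bar>t - l\<bar> < \<delta> \<Longrightarrow> integrable M (f t)" and H: "integrable M H"
    and lip: "\<And>t x. \<bar>t - l\<bar> < \<delta> \<Longrightarrow> x \<in> space M \<Longrightarrow> \<bar>f t x - f l x\<bar> \<le> \<bar>t - l\<bar> * H x"
    and der: "AE x in M. ((\<lambda>t. f t x) has_real_derivative f' x) (at l)"
    and \<delta>: "\<delta> > 0"
  shows "((\<lambda>t. \<integral>x. f t x \<partial>M) has_real_derivative (\<integral>x. f' x \<partial>M)) (at l)"
proof -
  define q where "q t x = (f t x - f l x) / (t - l)" for t x
  have near: "eventually (\<lambda>t. \<bar>t - l\<bar> < \<delta> \<and> t \<noteq> l) (at l)"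
    using eventually_at[of _ l UNIV] \<delta> by (auto simp: dist_real_def)
  have "((\<lambda>t. integral\<^sup>L M (q t)) \<longlongrightarrow> integral\<^sup>L M f') (at l)"
  proof (rule integral_dominated_convergence_at[where w=H])
    show "q t \<in> borel_measurable M" for t unfolding q_def using meas by measurable
    show "AE x in M. ((\<lambda>t. q t x) \<longlongrightarrow> f' x) (at l)"
      using der by eventually_elim (simp add: q_def has_field_derivative_iff)
    show "eventually (\<lambda>t. AE x in M. \<bar>q t x\<bar> \<le> H x) (at l)"
      using near by eventually_elim (auto intro!: AE_I2 simp: q_def abs_divide divide_le_eq lip mult.commute[of "H _"])
  qed (use meas H in auto)
  moreover have "eventually (\<lambda>t. integral\<^sup>L M (q t) = ((\<integral>x. f t x \<partial>M) - (\<integral>x. f l x \<partial>M)) / (t - l)) (at l)"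
  proof (rule eventually_mono[OF near])
    fix t assume "\<bar>t - l\<bar> < \<delta> \<and> t \<noteq> l"
    then show "integral\<^sup>L M (q t) = ((\<integral>x. f t x \<partial>M) - (\<integral>x. f l x \<partial>M)) / (t - l)"
      using int[of t] int[of l] \<delta> unfolding q_def by (simp add: Bochner_Integration.integral_diff)
  qed
  ultimately show ?thesis
    unfolding has_field_derivative_iff by (rule Lim_transform_eventually)
qed

section \<open>The noise distribution\<close>

abbreviation gauss :: "real \<Rightarrow> real measure" where
  "gauss \<sigma> \<equiv> density lborel (normal_density 0 \<sigma>)"

context
  fixes \<sigma> :: real
  assumes \<sigma>: "0 < \<sigma>"
begin

lemma prob_space_gauss: "prob_space (gauss \<sigma>)"
  using prob_space_normal_density \<sigma> by auto

lemma integral_gauss: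
  "(f :: real \<Rightarrow> real) \<in> borel_measurable borel \<Longrightarrow> integral\<^sup>L (gauss \<sigma>) f = (\<integral>x. normal_density 0 \<sigma> x * f x \<partial>lborel)"
  by (subst integral_density) auto

lemma integrable_gauss_iff:
  "(f :: real \<Rightarrow> real) \<in> borel_measurable borel \<Longrightarrow> integrable (gauss \<sigma>) f \<longleftrightarrow> integrable lborel (\<lambda>x. normal_density 0 \<sigma> x * f x)"
  by (subst integrable_density) auto

lemma integrable_gauss_dominated:
  fixes f :: "real \<Rightarrow> real"
  assumes "f \<in> borel_measurable borel" "integrable (gauss \<sigma>) g" "\<And>x. \<bar>f x\<bar> \<le> g x"
  shows "integrable (gauss \<sigma>) f"
  using assms by (intro Bochner_Integration.integrable_bound[OF assms(2)])
    (auto intro!: AE_I2 order_trans[OF _ abs_ge_self])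

lemma integrable_gauss_const: "integrable (gauss \<sigma>) (\<lambda>_. c :: real)"
proof -
  interpret prob_space "gauss \<sigma>" by (rule prob_space_gauss)
  show ?thesis by simp
qed

lemma integrable_gauss_bounded:
  "(f :: real \<Rightarrow> real) \<in> borel_measurable borel \<Longrightarrow> (\<And>x. \<bar>f x\<bar> \<le> B) \<Longrightarrow> integrable (gauss \<sigma>) f"
  by (rule integrable_gauss_dominated[OF _ integrable_gauss_const])

lemma integrable_gauss_id: "integrable (gauss \<sigma>) (\<lambda>x. x)"
  using integrable_normal_moment_nz_1[OF \<sigma>, of 0] by (subst integrable_gauss_iff) auto

lemma integrable_gauss_abs: "integrable (gauss \<sigma>) (\<lambda>x. \<bar>x\<bar>)"
  using integrable_gauss_id by (rule integrable_abs)

lemma integrable_gauss_square: "integrable (gauss \<sigma>) (\<lambda>x. x\<^sup>2)"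
  using integrable_normal_moment[OF \<sigma>, of 0 2] by (subst integrable_gauss_iff) auto

lemma integral_gauss_id: "(\<integral>x. x \<partial>gauss \<sigma>) = 0"
  using integral_normal_moment_nz_1[OF \<sigma>, of 0] by (subst integral_gauss) (auto simp: mult.commute)

lemma AE_gauss_neq: "AE x in gauss \<sigma>. x \<noteq> a"
  using AE_lborel_singleton[of a] by (subst AE_density) (auto elim: eventually_mono)

lemma prob_space_noise: "prob_space (noise P \<sigma>)"
  unfolding noise_def by (rule prob_space.prob_space_PiM_const[OF prob_space_gauss])

lemma finite_measure_noise: "finite_measure (noise P \<sigma>)"
proof -
  interpret prob_space "noise P \<sigma>" by (rule prob_space_noise)
  show ?thesis by (rule finite_measure_axioms)
qed

lemma integral_noise_component:
  "i < P \<Longrightarrow> (f :: real \<Rightarrow> real) \<in> borel_measurable borel \<Longrightarrow> (\<integral>w. f (w i) \<partial>noise P \<sigma>) = integral\<^sup>L (gauss \<sigma>) f"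
  unfolding noise_def by (rule prob_space.integral_PiM_component[OF prob_space_gauss]) auto

lemma integrable_noise_component_iff:
  "i < P \<Longrightarrow> (f :: real \<Rightarrow> real) \<in> borel_measurable borel \<Longrightarrow> integrable (noise P \<sigma>) (\<lambda>w. f (w i)) \<longleftrightarrow> integrable (gauss \<sigma>) f"
  unfolding noise_def by (rule prob_space.integrable_PiM_component_iff[OF prob_space_gauss]) auto

end

section \<open>Exact risk and degrees of freedom\<close>

context
  fixes \<sigma> :: real
  assumes \<sigma>: "0 < \<sigma>"
begin

lemma integrable_gauss_ST_diff_square: "integrable (gauss \<sigma>) (\<lambda>x. (ST (\<mu> + x) t - \<mu>)\<^sup>2)"
proof (rule integrable_gauss_dominated[OF \<sigma>])
  show "integrable (gauss \<sigma>) (\<lambda>x. 2 * x\<^sup>2 + 2 * t\<^sup>2)"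
    using integrable_gauss_square[OF \<sigma>] integrable_gauss_const[OF \<sigma>] by simp
  fix x
  have "\<bar>ST (\<mu> + x) t - \<mu>\<bar> \<le> \<bar>x\<bar> + \<bar>t\<bar>" using abs_ST_diff_le[of "\<mu> + x" t] by linarith
  then have "\<bar>ST (\<mu> + x) t - \<mu>\<bar>\<^sup>2 \<le> (\<bar>x\<bar> + \<bar>t\<bar>)\<^sup>2" by (intro power_mono) auto
  also have "\<dots> \<le> 2 * x\<^sup>2 + 2 * t\<^sup>2"
    using sum_squares_ge_zero[of "\<bar>x\<bar> - \<bar>t\<bar>" 0] by (simp add: power2_eq_square algebra_simps)
  finally show "\<bar>(ST (\<mu> + x) t - \<mu>)\<^sup>2\<bar> \<le> 2 * x\<^sup>2 + 2 * t\<^sup>2" by simp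
qed simp

lemma integrable_gauss_mult_ST: "integrable (gauss \<sigma>) (\<lambda>x. x * ST (\<mu> + x) t)"
proof (rule integrable_gauss_dominated[OF \<sigma>])
  show "integrable (gauss \<sigma>) (\<lambda>x. x\<^sup>2 + (\<bar>\<mu>\<bar> + \<bar>t\<bar>) * \<bar>x\<bar>)"
    using integrable_gauss_square[OF \<sigma>] integrable_gauss_abs[OF \<sigma>] by simp
  fix x
  have "\<bar>ST (\<mu> + x) t\<bar> \<le> \<bar>x\<bar> + (\<bar>\<mu>\<bar> + \<bar>t\<bar>)" using abs_ST_diff_le[of "\<mu> + x" t] by linarith
  then have "\<bar>x\<bar> * \<bar>ST (\<mu> + x) t\<bar> \<le> \<bar>x\<bar> * (\<bar>x\<bar> + (\<bar>\<mu>\<bar> + \<bar>t\<bar>))" by (intro mult_left_mono) auto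
  then show "\<bar>x * ST (\<mu> + x) t\<bar> \<le> x\<^sup>2 + (\<bar>\<mu>\<bar> + \<bar>t\<bar>) * \<bar>x\<bar>"
    by (simp add: abs_mult power2_eq_square algebra_simps)
qed simp

lemma risk_eq_sum: "risk P \<sigma> m t = (\<Sum>i<P. \<integral>x. (ST (m i + x) t - m i)\<^sup>2 \<partial>gauss \<sigma>)"
proof -
  have "risk P \<sigma> m t = (\<Sum>i<P. \<integral>w. (ST (m i + w i) t - m i)\<^sup>2 \<partial>noise P \<sigma>)"
    unfolding risk_def
  proof (rule Bochner_Integration.integral_sum)
    fix i assume "i \<in> {..<P}"
    then show "integrable (noise P \<sigma>) (\<lambda>w. (ST (m i + w i) t - m i)\<^sup>2)"
      using integrable_noise_component_iff[OF \<sigma>, of i P "\<lambda>x. (ST (m i + x) t - m i)\<^sup>2"]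
        integrable_gauss_ST_diff_square by simp
  qed
  also have "\<dots> = (\<Sum>i<P. \<integral>x. (ST (m i + x) t - m i)\<^sup>2 \<partial>gauss \<sigma>)"
    by (rule sum.cong[OF refl]) (rule integral_noise_component[OF \<sigma>]; simp)
  finally show ?thesis .
qed

lemma cov_noise_component:
  assumes i: "i < P"
  shows "cov (noise P \<sigma>) (\<lambda>w. \<mu> + w i) (\<lambda>w. ST (\<mu> + w i) t) = (\<integral>x. x * ST (\<mu> + x) t \<partial>gauss \<sigma>)"
proof -
  interpret prob_space "gauss \<sigma>" by (rule prob_space_gauss[OF \<sigma>])
  have "(\<integral>v. \<mu> + v i \<partial>noise P \<sigma>) = (\<integral>x. \<mu> + x \<partial>gauss \<sigma>)"
    by (rule integral_noise_component[OF \<sigma> i]) simp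
  also have "\<dots> = \<mu>"
    using integrable_gauss_id[OF \<sigma>] integral_gauss_id[OF \<sigma>] prob_space by simp
  finally have mean: "(\<integral>v. \<mu> + v i \<partial>noise P \<sigma>) = \<mu>" .
  define c where "c = (\<integral>v. ST (\<mu> + v i) t \<partial>noise P \<sigma>)"
  have "cov (noise P \<sigma>) (\<lambda>w. \<mu> + w i) (\<lambda>w. ST (\<mu> + w i) t)
      = (\<integral>w. (\<mu> + w i - \<mu>) * (ST (\<mu> + w i) t - c) \<partial>noise P \<sigma>)"
    unfolding cov_def mean c_def ..
  also have "\<dots> = (\<integral>x. (\<mu> + x - \<mu>) * (ST (\<mu> + x) t - c) \<partial>gauss \<sigma>)"
    by (rule integral_noise_component[OF \<sigma> i]) simp
  also have "\<dots> = (\<integral>x. x * ST (\<mu> + x) t - c * x \<partial>gauss \<sigma>)"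
    by (simp add: algebra_simps)
  also have "\<dots> = (\<integral>x. x * ST (\<mu> + x) t \<partial>gauss \<sigma>)"
    using integrable_gauss_mult_ST integrable_gauss_id[OF \<sigma>] integral_gauss_id[OF \<sigma>] by simp
  finally show ?thesis .
qed

lemma dof_eq_sum: "dof P \<sigma> m t = (\<Sum>i<P. \<integral>x. x * ST (m i + x) t \<partial>gauss \<sigma>) / \<sigma>\<^sup>2"
  unfolding dof_def by (simp add: cov_noise_component)

lemma AE_gauss_not_kink: "AE x in gauss \<sigma>. \<bar>\<mu> + x\<bar> \<noteq> l"
  using AE_gauss_neq[OF \<sigma>, of "l - \<mu>"] AE_gauss_neq[OF \<sigma>, of "- l - \<mu>"]
  by eventually_elim (auto simp: abs_if split: if_splits)

lemma has_real_derivative_risk_component: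
  assumes l: "l > 0"
  shows "((\<lambda>t. \<integral>x. (ST (\<mu> + x) t - \<mu>)\<^sup>2 \<partial>gauss \<sigma>) has_real_derivative
           (\<integral>x. 2 * (ST (\<mu> + x) l - \<mu>) * dST (\<mu> + x) l \<partial>gauss \<sigma>)) (at l)"
proof (rule has_real_derivative_integral[where \<delta>="l / 2" and H="\<lambda>x. 2 * \<bar>x\<bar> + 3 * l"])
  show "integrable (gauss \<sigma>) (\<lambda>x. 2 * \<bar>x\<bar> + 3 * l)"
    using integrable_gauss_abs[OF \<sigma>] integrable_gauss_const[OF \<sigma>] by simp
  fix t x assume t: "\<bar>t - l\<bar> < l / 2"
  then have t0: "0 \<le> t" using l by (auto simp: abs_if split: if_splits)
  have close: "\<bar>ST (\<mu> + x) s - \<mu>\<bar> \<le> \<bar>x\<bar> + s" if "0 \<le> s" for s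
    using abs_ST_diff_le[of "\<mu> + x" s] that by linarith
  have "\<bar>(ST (\<mu> + x) t - \<mu>)\<^sup>2 - (ST (\<mu> + x) l - \<mu>)\<^sup>2\<bar>
      = \<bar>ST (\<mu> + x) t - ST (\<mu> + x) l\<bar> * \<bar>(ST (\<mu> + x) t - \<mu>) + (ST (\<mu> + x) l - \<mu>)\<bar>"
    by (simp add: power2_eq_square abs_mult[symmetric] algebra_simps)
  also have "\<dots> \<le> \<bar>t - l\<bar> * (2 * \<bar>x\<bar> + 3 * l)"
  proof (rule mult_mono)
    show "\<bar>(ST (\<mu> + x) t - \<mu>) + (ST (\<mu> + x) l - \<mu>)\<bar> \<le> 2 * \<bar>x\<bar> + 3 * l"
      using close[OF t0] close[of l] t l by linarith
  qed (use abs_ST_diff_threshold_le[of t l] t0 l in auto)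
  finally show "\<bar>(ST (\<mu> + x) t - \<mu>)\<^sup>2 - (ST (\<mu> + x) l - \<mu>)\<^sup>2\<bar> \<le> \<bar>t - l\<bar> * (2 * \<bar>x\<bar> + 3 * l)" .
next
  show "AE x in gauss \<sigma>. ((\<lambda>t. (ST (\<mu> + x) t - \<mu>)\<^sup>2) has_real_derivative
      2 * (ST (\<mu> + x) l - \<mu>) * dST (\<mu> + x) l) (at l)"
    using AE_gauss_not_kink[of \<mu> l] by eventually_elim
      (auto intro!: derivative_eq_intros ST_has_real_derivative_threshold[OF l] simp: power2_eq_square)
qed (use l integrable_gauss_ST_diff_square in auto)

lemma has_real_derivative_dof_component:
  assumes l: "l > 0"
  shows "((\<lambda>t. \<integral>x. x * ST (\<mu> + x) t \<partial>gauss \<sigma>) has_real_derivative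
           (\<integral>x. x * dST (\<mu> + x) l \<partial>gauss \<sigma>)) (at l)"
proof (rule has_real_derivative_integral[where \<delta>="l / 2" and H="\<lambda>x. \<bar>x\<bar>"])
  fix t x assume t: "\<bar>t - l\<bar> < l / 2"
  then have "\<bar>ST (\<mu> + x) t - ST (\<mu> + x) l\<bar> \<le> \<bar>t - l\<bar>"
    using l by (intro abs_ST_diff_threshold_le) (auto simp: abs_if split: if_splits)
  then have "\<bar>x\<bar> * \<bar>ST (\<mu> + x) t - ST (\<mu> + x) l\<bar> \<le> \<bar>x\<bar> * \<bar>t - l\<bar>" by (intro mult_left_mono) auto
  then show "\<bar>x * ST (\<mu> + x) t - x * ST (\<mu> + x) l\<bar> \<le> \<bar>t - l\<bar> * \<bar>x\<bar>"
    by (simp add: abs_mult[symmetric] algebra_simps)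
next
  show "AE x in gauss \<sigma>. ((\<lambda>t. x * ST (\<mu> + x) t) has_real_derivative x * dST (\<mu> + x) l) (at l)"
    using AE_gauss_not_kink[of \<mu> l] by eventually_elim
      (auto intro!: derivative_eq_intros ST_has_real_derivative_threshold[OF l])
qed (use l integrable_gauss_abs[OF \<sigma>] integrable_gauss_mult_ST in auto)

lemma integral_gauss_mult_dST:
  assumes l: "l > 0"
  shows "(\<integral>x. x * dST (\<mu> + x) l \<partial>gauss \<sigma>)
    = - (\<sigma>\<^sup>2 * (normal_density 0 \<sigma> (l - \<mu>) + normal_density 0 \<sigma> (- l - \<mu>)))"
proof -
  have "normal_density 0 \<sigma> x * (x * dST (\<mu> + x) l)
      = normal_density 0 \<sigma> x * x * indicator {..< - l - \<mu>} x
        - normal_density 0 \<sigma> x * x * indicator {l - \<mu><..} x" for x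
    using l unfolding dST_def by (auto simp: sgn_if split: split_indicator)
  then have "(\<integral>x. x * dST (\<mu> + x) l \<partial>gauss \<sigma>)
      = (\<integral>x. normal_density 0 \<sigma> x * x * indicator {..< - l - \<mu>} x
          - normal_density 0 \<sigma> x * x * indicator {l - \<mu><..} x \<partial>lborel)"
    by (simp add: integral_gauss[OF \<sigma>])
  also have "\<dots> = - (\<sigma>\<^sup>2 * normal_density 0 \<sigma> (- l - \<mu>)) - \<sigma>\<^sup>2 * normal_density 0 \<sigma> (l - \<mu>)"
    using integrable_normal_moment_nz_1[OF \<sigma>, of 0]
    by (subst Bochner_Integration.integral_diff)
       (auto intro!: integrable_real_mult_indicator simp: integral_normal_density_mult_lower_tail[OF \<sigma>]
         integral_normal_density_mult_upper_tail[OF \<sigma>])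
  finally show ?thesis by (simp add: algebra_simps)
qed

lemma deriv_dof_eq_sum:
  assumes l: "l > 0"
  shows "deriv (\<lambda>t. dof P \<sigma> m t) l = (\<Sum>i<P. \<integral>x. x * dST (m i + x) l \<partial>gauss \<sigma>) / \<sigma>\<^sup>2"
  unfolding dof_eq_sum
  by (intro DERIV_imp_deriv DERIV_cdivide DERIV_sum has_real_derivative_dof_component[OF l])

lemma deriv_dof:
  assumes l: "l > 0"
  shows "deriv (\<lambda>t. dof P \<sigma> m t) l = - (\<Sum>i<P. normal_density 0 \<sigma> (l - m i) + normal_density 0 \<sigma> (- l - m i))"
  using \<sigma> by (simp add: deriv_dof_eq_sum[OF l] integral_gauss_mult_dST[OF l] sum_divide_distrib sum_negf)

text \<open>This identity is what makes \<open>SUGAR\<close> an unbiased estimator of \<open>\<nabla>\<^sub>2R\<close>.\<close>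
lemma deriv_risk:
  assumes l: "l > 0"
  shows "deriv (\<lambda>t. risk P \<sigma> m t) l
    = 2 * (\<Sum>i<P. \<integral>x. dST (m i + x) l * (ST (m i + x) l - (m i + x)) \<partial>gauss \<sigma>)
      + 2 * \<sigma>\<^sup>2 * deriv (\<lambda>t. dof P \<sigma> m t) l"
proof -
  have split: "(\<integral>x. 2 * (ST (\<mu> + x) l - \<mu>) * dST (\<mu> + x) l \<partial>gauss \<sigma>)
      = 2 * (\<integral>x. dST (\<mu> + x) l * (ST (\<mu> + x) l - (\<mu> + x)) \<partial>gauss \<sigma>)
        + 2 * (\<integral>x. x * dST (\<mu> + x) l \<partial>gauss \<sigma>)" for \<mu>
  proof -
    have "integrable (gauss \<sigma>) (\<lambda>x. dST (\<mu> + x) l * (ST (\<mu> + x) l - (\<mu> + x)))"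
      using abs_dST_mult_ST_diff_le l by (intro integrable_gauss_bounded[OF \<sigma>, where B=l]) auto
    moreover have "integrable (gauss \<sigma>) (\<lambda>x. x * dST (\<mu> + x) l)"
      using abs_dST_le_1 by (intro integrable_gauss_dominated[OF \<sigma> _ integrable_gauss_abs[OF \<sigma>]])
        (auto simp: abs_mult mult_left_le)
    ultimately have "(\<integral>x. 2 * (dST (\<mu> + x) l * (ST (\<mu> + x) l - (\<mu> + x))) + 2 * (x * dST (\<mu> + x) l) \<partial>gauss \<sigma>)
        = 2 * (\<integral>x. dST (\<mu> + x) l * (ST (\<mu> + x) l - (\<mu> + x)) \<partial>gauss \<sigma>)
          + 2 * (\<integral>x. x * dST (\<mu> + x) l \<partial>gauss \<sigma>)"
      by simp
    then show ?thesis by (simp add: algebra_simps)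
  qed
  have "deriv (\<lambda>t. risk P \<sigma> m t) l = (\<Sum>i<P. \<integral>x. 2 * (ST (m i + x) l - m i) * dST (m i + x) l \<partial>gauss \<sigma>)"
    unfolding risk_eq_sum
    by (intro DERIV_imp_deriv DERIV_sum has_real_derivative_risk_component[OF l])
  then show ?thesis
    using \<sigma> unfolding split deriv_dof_eq_sum[OF l]
    by (simp add: sum.distrib sum_distrib_left sum_divide_distrib)
qed

end

section \<open>The finite-difference estimators\<close>

definition dST_quotient :: "real \<Rightarrow> real \<Rightarrow> real \<Rightarrow> real" where
  "dST_quotient l \<epsilon> y = (dST (y + \<epsilon>) l - dST y l) / \<epsilon>"

lemma dST_quotient_measurable[measurable (raw)]:
  "f \<in> borel_measurable M \<Longrightarrow> (\<lambda>x. dST_quotient l \<epsilon> (f x)) \<in> borel_measurable M"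
proof -
  have "(\<lambda>y. dST_quotient l \<epsilon> y) \<in> borel_measurable borel" unfolding dST_quotient_def by measurable
  then show "f \<in> borel_measurable M \<Longrightarrow> (\<lambda>x. dST_quotient l \<epsilon> (f x)) \<in> borel_measurable M"
    using measurable_compose by blast
qed

lemma grad_df_FD_eq_sum: "grad_df_FD P y l \<epsilon> = (\<Sum>i<P. dST_quotient l \<epsilon> (y i))"
  unfolding grad_df_FD_def dST_quotient_def by (simp add: sum_divide_distrib)

lemma abs_dST_quotient_le: "0 < \<epsilon> \<Longrightarrow> \<bar>dST_quotient l \<epsilon> y\<bar> \<le> 2 / \<epsilon>"
  using abs_dST_le_1[of "y + \<epsilon>" l] abs_dST_le_1[of y l]
  unfolding dST_quotient_def by (simp add: abs_divide divide_right_mono)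

context
  fixes \<sigma> :: real
  assumes \<sigma>: "0 < \<sigma>"
begin

lemma integral_gauss_dST_quotient:
  fixes \<mu> \<epsilon> l :: real
  assumes e: "0 < \<epsilon>" "\<epsilon> < 2 * l"
  defines "m1 \<equiv> \<integral>x. normal_density 0 \<sigma> x * indicator {l - \<mu> - \<epsilon><..l - \<mu>} x \<partial>lborel"
    and "m2 \<equiv> \<integral>x. normal_density 0 \<sigma> x * indicator {- l - \<mu> - \<epsilon>..<- l - \<mu>} x \<partial>lborel"
  shows "(\<integral>x. dST_quotient l \<epsilon> (\<mu> + x) \<partial>gauss \<sigma>) = - (m1 + m2) / \<epsilon>"
    and "(\<integral>x. (dST_quotient l \<epsilon> (\<mu> + x))\<^sup>2 \<partial>gauss \<sigma>) = (m1 + m2) / \<epsilon>\<^sup>2"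
proof -
  let ?S1 = "{l - \<mu> - \<epsilon><..l - \<mu>}" and ?S2 = "{- l - \<mu> - \<epsilon>..<- l - \<mu>}"
  have i1: "integrable lborel (\<lambda>x. normal_density 0 \<sigma> x * indicator ?S1 x)"
    and i2: "integrable lborel (\<lambda>x. normal_density 0 \<sigma> x * indicator ?S2 x)"
    by (auto intro!: integrable_real_mult_indicator integrable_normal_density[OF \<sigma>])
  have "(\<integral>x. dST_quotient l \<epsilon> (\<mu> + x) \<partial>gauss \<sigma>)
      = (\<integral>x. normal_density 0 \<sigma> x * dST_quotient l \<epsilon> (\<mu> + x) \<partial>lborel)"
    by (rule integral_gauss[OF \<sigma>]) measurable
  also have "\<dots> = (\<integral>x. - (normal_density 0 \<sigma> x * indicator ?S1 x + normal_density 0 \<sigma> x * indicator ?S2 x) / \<epsilon> \<partial>lborel)"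
    unfolding dST_quotient_def dST_forward_difference[OF e] by (simp add: algebra_simps)
  also have "\<dots> = - (m1 + m2) / \<epsilon>"
    using i1 i2 unfolding m1_def m2_def by simp
  finally show "(\<integral>x. dST_quotient l \<epsilon> (\<mu> + x) \<partial>gauss \<sigma>) = - (m1 + m2) / \<epsilon>" .
  have "(\<integral>x. (dST_quotient l \<epsilon> (\<mu> + x))\<^sup>2 \<partial>gauss \<sigma>)
      = (\<integral>x. normal_density 0 \<sigma> x * (dST_quotient l \<epsilon> (\<mu> + x))\<^sup>2 \<partial>lborel)"
    by (rule integral_gauss[OF \<sigma>]) measurable
  also have "\<dots> = (\<integral>x. (normal_density 0 \<sigma> x * indicator ?S1 x + normal_density 0 \<sigma> x * indicator ?S2 x) / \<epsilon>\<^sup>2 \<partial>lborel)"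
    unfolding dST_quotient_def dST_forward_difference[OF e] using e
    by (intro Bochner_Integration.integral_cong) (auto simp: power_divide power2_eq_square split: split_indicator)
  also have "\<dots> = (m1 + m2) / \<epsilon>\<^sup>2"
    using i1 i2 unfolding m1_def m2_def by simp
  finally show "(\<integral>x. (dST_quotient l \<epsilon> (\<mu> + x))\<^sup>2 \<partial>gauss \<sigma>) = (m1 + m2) / \<epsilon>\<^sup>2" .
qed

lemma integral_gauss_dST_quotient_bias:
  assumes e: "0 < \<epsilon>" "\<epsilon> < 2 * l"
  shows "\<bar>(\<integral>x. dST_quotient l \<epsilon> (\<mu> + x) \<partial>gauss \<sigma>) + (normal_density 0 \<sigma> (l - \<mu>) + normal_density 0 \<sigma> (- l - \<mu>))\<bar>
    \<le> 2 * \<epsilon> / (sqrt (2 * pi * \<sigma>\<^sup>2) * \<sigma>)"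
proof -
  define K where "K = sqrt (2 * pi * \<sigma>\<^sup>2) * \<sigma>"
  define m1 where "m1 = (\<integral>x. normal_density 0 \<sigma> x * indicator {l - \<mu> - \<epsilon><..l - \<mu>} x \<partial>lborel)"
  define m2 where "m2 = (\<integral>x. normal_density 0 \<sigma> x * indicator {- l - \<mu> - \<epsilon>..<- l - \<mu>} x \<partial>lborel)"
  have a1: "\<bar>m1 - \<epsilon> * normal_density 0 \<sigma> (l - \<mu>)\<bar> \<le> \<epsilon>\<^sup>2 / K"
    unfolding m1_def K_def using e by (intro integral_normal_density_indicator_approx[OF \<sigma>]) auto
  have a2: "\<bar>m2 - \<epsilon> * normal_density 0 \<sigma> (- l - \<mu>)\<bar> \<le> \<epsilon>\<^sup>2 / K"
    unfolding m2_def K_def using e by (intro integral_normal_density_indicator_approx[OF \<sigma>]) auto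
  have "- (m1 + m2) / \<epsilon> + (normal_density 0 \<sigma> (l - \<mu>) + normal_density 0 \<sigma> (- l - \<mu>))
      = - ((m1 - \<epsilon> * normal_density 0 \<sigma> (l - \<mu>)) + (m2 - \<epsilon> * normal_density 0 \<sigma> (- l - \<mu>))) / \<epsilon>"
    using e by (simp add: field_simps)
  also have "\<bar>\<dots>\<bar> \<le> (\<epsilon>\<^sup>2 / K + \<epsilon>\<^sup>2 / K) / \<epsilon>"
  proof -
    have "\<bar>(m1 - \<epsilon> * normal_density 0 \<sigma> (l - \<mu>)) + (m2 - \<epsilon> * normal_density 0 \<sigma> (- l - \<mu>))\<bar>
        \<le> \<epsilon>\<^sup>2 / K + \<epsilon>\<^sup>2 / K"
      by (rule order_trans[OF abs_triangle_ineq add_mono[OF a1 a2]])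
    then show ?thesis
      unfolding abs_divide abs_minus_cancel abs_of_pos[OF e(1)] using e by (intro divide_right_mono) auto
  qed
  also have "\<dots> = 2 * \<epsilon> / K" using e by (simp add: power2_eq_square)
  finally show ?thesis
    unfolding K_def m1_def m2_def integral_gauss_dST_quotient(1)[OF e] .
qed

lemma integral_gauss_dST_quotient_square_le:
  assumes e: "0 < \<epsilon>" "\<epsilon> < 2 * l"
  shows "(\<integral>x. (dST_quotient l \<epsilon> (\<mu> + x))\<^sup>2 \<partial>gauss \<sigma>) \<le> 2 / (sqrt (2 * pi * \<sigma>\<^sup>2) * \<epsilon>)"
proof -
  let ?m = "\<lambda>S. \<integral>x. normal_density 0 \<sigma> x * indicator S x \<partial>lborel"
  have "?m {l - \<mu> - \<epsilon><..l - \<mu>} + ?m {- l - \<mu> - \<epsilon>..<- l - \<mu>}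
      \<le> \<epsilon> / sqrt (2 * pi * \<sigma>\<^sup>2) + \<epsilon> / sqrt (2 * pi * \<sigma>\<^sup>2)"
    using e by (intro add_mono integral_normal_density_indicator_le[OF \<sigma>]) auto
  then have "(?m {l - \<mu> - \<epsilon><..l - \<mu>} + ?m {- l - \<mu> - \<epsilon>..<- l - \<mu>}) / \<epsilon>\<^sup>2
      \<le> (\<epsilon> / sqrt (2 * pi * \<sigma>\<^sup>2) + \<epsilon> / sqrt (2 * pi * \<sigma>\<^sup>2)) / \<epsilon>\<^sup>2"
    by (rule divide_right_mono) simp
  also have "\<dots> = 2 / (sqrt (2 * pi * \<sigma>\<^sup>2) * \<epsilon>)"
    using e by (simp add: power2_eq_square field_simps)
  finally show ?thesis unfolding integral_gauss_dST_quotient(2)[OF e] .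
qed

lemma noise_average_deviation_le:
  fixes F :: "nat \<Rightarrow> real \<Rightarrow> real"
  assumes meas: "\<And>i. F i \<in> borel_measurable borel" and bnd: "\<And>i x. \<bar>F i x\<bar> \<le> B"
    and "0 < e" "0 < P"
  shows "measure (noise P \<sigma>)
      {w \<in> space (noise P \<sigma>). e < \<bar>(\<Sum>i<P. F i (w i) - integral\<^sup>L (gauss \<sigma>) (F i)) / real P\<bar>}
    \<le> (\<Sum>i<P. \<integral>x. (F i x)\<^sup>2 \<partial>gauss \<sigma>) / (e * real P)\<^sup>2"
proof -
  interpret gauss: prob_space "gauss \<sigma>" by (rule prob_space_gauss[OF \<sigma>])
  interpret noise: prob_space "noise P \<sigma>" by (rule prob_space_noise[OF \<sigma>])
  let ?S = "\<lambda>w. \<Sum>i<P. F i (w i) - integral\<^sup>L (gauss \<sigma>) (F i)"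
  have "(\<lambda>w. \<bar>?S w\<bar>) \<in> borel_measurable (noise P \<sigma>)"
    unfolding noise_def using meas
    by (intro borel_measurable_abs borel_measurable_sum borel_measurable_diff borel_measurable_const
        measurable_compose[OF measurable_component_singleton]) auto
  then have "{w \<in> space (noise P \<sigma>). e * real P \<le> \<bar>?S w\<bar>} \<in> sets (noise P \<sigma>)"
    by (rule borel_measurable_le[OF borel_measurable_const, unfolded pred_def])
  moreover have "{w \<in> space (noise P \<sigma>). e < \<bar>?S w / real P\<bar>}
      \<subseteq> {w \<in> space (noise P \<sigma>). e * real P \<le> \<bar>?S w\<bar>}"
    using \<open>0 < P\<close> by (auto simp: abs_divide less_divide_eq)
  ultimately have "measure (noise P \<sigma>) {w \<in> space (noise P \<sigma>). e < \<bar>?S w / real P\<bar>}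
      \<le> measure (noise P \<sigma>) {w \<in> space (noise P \<sigma>). e * real P \<le> \<bar>?S w\<bar>}"
    by (intro noise.finite_measure_mono)
  also have "\<dots> \<le> (\<Sum>i<P. \<integral>x. (F i x)\<^sup>2 \<partial>gauss \<sigma>) / (e * real P)\<^sup>2"
    unfolding noise_def using assms by (intro gauss.PiM_sum_deviation_le) auto
  finally show ?thesis .
qed

lemma plim_zero_noise_average_deviation:
  fixes F :: "nat \<Rightarrow> nat \<Rightarrow> real \<Rightarrow> real"
  assumes meas: "\<And>P i. F P i \<in> borel_measurable borel" and bnd: "\<And>P i x. \<bar>F P i x\<bar> \<le> B P"
    and second_moment: "eventually (\<lambda>P. \<forall>i<P. (\<integral>x. (F P i x)\<^sup>2 \<partial>gauss \<sigma>) \<le> s P) sequentially"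
    and lim: "(\<lambda>P. s P / real P) \<longlonglongrightarrow> 0"
  shows "plim_zero (\<lambda>P. noise P \<sigma>)
    (\<lambda>P w. (\<Sum>i<P. F P i (w i) - integral\<^sup>L (gauss \<sigma>) (F P i)) / real P)"
  unfolding plim_zero_def
proof (intro allI impI)
  fix e :: real assume e: "e > 0"
  have "eventually (\<lambda>P. measure (noise P \<sigma>)
      {w \<in> space (noise P \<sigma>). e < \<bar>(\<Sum>i<P. F P i (w i) - integral\<^sup>L (gauss \<sigma>) (F P i)) / real P\<bar>}
      \<le> s P / real P / e\<^sup>2) sequentially"
    using second_moment eventually_gt_at_top[of 0]
  proof eventually_elim
    case (elim P)
    have "(\<Sum>i<P. \<integral>x. (F P i x)\<^sup>2 \<partial>gauss \<sigma>) / (e * real P)\<^sup>2 \<le> (\<Sum>i<P. s P) / (e * real P)\<^sup>2"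
      using elim by (intro divide_right_mono sum_mono) auto
    also have "\<dots> = s P / real P / e\<^sup>2"
      using elim by (simp add: power2_eq_square)
    finally show ?case
      using noise_average_deviation_le[of "F P" "B P", OF meas bnd e elim(2)] by linarith
  qed
  moreover have "(\<lambda>P. s P / real P / e\<^sup>2) \<longlonglongrightarrow> 0"
    using tendsto_divide[OF lim tendsto_const[of "e\<^sup>2"]] e by simp
  ultimately show "(\<lambda>P. measure (noise P \<sigma>) {w \<in> space (noise P \<sigma>).
      e < \<bar>(\<Sum>i<P. F P i (w i) - integral\<^sup>L (gauss \<sigma>) (F P i)) / real P\<bar>}) \<longlonglongrightarrow> 0"
    by (intro tendsto_sandwich[OF always_eventually[OF allI[OF measure_nonneg]] _ tendsto_const])
qed

end

context
  fixes \<sigma> :: real and eps :: "nat \<Rightarrow> real" and l :: real and m :: "nat \<Rightarrow> nat \<Rightarrow> real"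
  assumes \<sigma>: "0 < \<sigma>" and eps_pos: "\<And>P. 0 < eps P" and eps_lim: "eps \<longlonglongrightarrow> 0"
    and eps_slow: "(\<lambda>P. 1 / (real P * eps P)) \<longlonglongrightarrow> 0" and l: "0 < l"
begin

lemma eventually_eps_small: "eventually (\<lambda>P. eps P < 2 * l) sequentially"
  using order_tendstoD(2)[OF eps_lim, of "2 * l"] l by simp

lemma plim_zero_dST_quotient_fluctuation:
  "plim_zero (\<lambda>P. noise P \<sigma>)
     (\<lambda>P w. (\<Sum>i<P. dST_quotient l (eps P) (m P i + w i)
        - (\<integral>x. dST_quotient l (eps P) (m P i + x) \<partial>gauss \<sigma>)) / real P)"
proof (rule plim_zero_noise_average_deviation[OF \<sigma>, where F="\<lambda>P i x. dST_quotient l (eps P) (m P i + x)"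
      and B="\<lambda>P. 2 / eps P" and s="\<lambda>P. 2 / (sqrt (2 * pi * \<sigma>\<^sup>2) * eps P)"])
  show "\<bar>dST_quotient l (eps P) (m P i + x)\<bar> \<le> 2 / eps P" for P i x
    by (rule abs_dST_quotient_le[OF eps_pos])
  show "eventually (\<lambda>P. \<forall>i<P. (\<integral>x. (dST_quotient l (eps P) (m P i + x))\<^sup>2 \<partial>gauss \<sigma>)
      \<le> 2 / (sqrt (2 * pi * \<sigma>\<^sup>2) * eps P)) sequentially"
    using eventually_eps_small
    by eventually_elim (auto intro: integral_gauss_dST_quotient_square_le[OF \<sigma> eps_pos])
  show "(\<lambda>P. 2 / (sqrt (2 * pi * \<sigma>\<^sup>2) * eps P) / real P) \<longlonglongrightarrow> 0"
    using tendsto_mult_left[OF eps_slow, of "2 / sqrt (2 * pi * \<sigma>\<^sup>2)"] by (simp add: field_simps)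
qed measurable

lemma dST_quotient_bias_average_tendsto_0:
  "(\<lambda>P. (\<Sum>i<P. (\<integral>x. dST_quotient l (eps P) (m P i + x) \<partial>gauss \<sigma>)
      + (normal_density 0 \<sigma> (l - m P i) + normal_density 0 \<sigma> (- l - m P i))) / real P) \<longlonglongrightarrow> 0"
proof (rule Lim_null_comparison)
  let ?c = "2 / (sqrt (2 * pi * \<sigma>\<^sup>2) * \<sigma>)"
  show "eventually (\<lambda>P. norm ((\<Sum>i<P. (\<integral>x. dST_quotient l (eps P) (m P i + x) \<partial>gauss \<sigma>)
      + (normal_density 0 \<sigma> (l - m P i) + normal_density 0 \<sigma> (- l - m P i))) / real P) \<le> ?c * eps P) sequentially"
    using eventually_eps_small eventually_gt_at_top[of 0]
  proof eventually_elim
    case (elim P)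
    have "\<bar>\<Sum>i<P. (\<integral>x. dST_quotient l (eps P) (m P i + x) \<partial>gauss \<sigma>)
        + (normal_density 0 \<sigma> (l - m P i) + normal_density 0 \<sigma> (- l - m P i))\<bar>
        \<le> (\<Sum>i<P. 2 * eps P / (sqrt (2 * pi * \<sigma>\<^sup>2) * \<sigma>))"
      by (rule order_trans[OF sum_abs sum_mono])
         (rule integral_gauss_dST_quotient_bias[OF \<sigma> eps_pos elim(1)])
    then show ?case using elim(2) by (simp add: abs_divide divide_le_eq mult.commute)
  qed
  show "(\<lambda>P. ?c * eps P) \<longlonglongrightarrow> 0"
    using tendsto_mult_left[OF eps_lim, of ?c] by simp
qed

lemma plim_zero_grad_df_FD_error:
  "plim_zero (\<lambda>P. noise P \<sigma>)
     (\<lambda>P w. (grad_df_FD P (\<lambda>i. m P i + w i) l (eps P) - deriv (\<lambda>t. dof P \<sigma> (m P) t) l) / real P)"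
proof -
  have decomp: "(grad_df_FD P (\<lambda>i. m P i + w i) l (eps P) - deriv (\<lambda>t. dof P \<sigma> (m P) t) l) / real P
      = (\<Sum>i<P. dST_quotient l (eps P) (m P i + w i)
          - (\<integral>x. dST_quotient l (eps P) (m P i + x) \<partial>gauss \<sigma>)) / real P
        + (\<Sum>i<P. (\<integral>x. dST_quotient l (eps P) (m P i + x) \<partial>gauss \<sigma>)
          + (normal_density 0 \<sigma> (l - m P i) + normal_density 0 \<sigma> (- l - m P i))) / real P" for P w
    unfolding grad_df_FD_eq_sum deriv_dof[OF \<sigma> l]
    by (simp add: sum_subtractf sum.distrib divide_inverse algebra_simps)
  show ?thesis
    unfolding decomp using plim_zero_dST_quotient_fluctuation dST_quotient_bias_average_tendsto_0
    by (intro plim_zero_add plim_zero_const finite_measure_noise[OF \<sigma>]) (auto simp: noise_def)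
qed

lemma plim_zero_SUGAR_term_fluctuation:
  "plim_zero (\<lambda>P. noise P \<sigma>)
     (\<lambda>P w. (\<Sum>i<P. dST (m P i + w i) l * (ST (m P i + w i) l - (m P i + w i))
        - (\<integral>x. dST (m P i + x) l * (ST (m P i + x) l - (m P i + x)) \<partial>gauss \<sigma>)) / real P)"
proof (rule plim_zero_noise_average_deviation[OF \<sigma>, where B="\<lambda>_. l" and s="\<lambda>_. l\<^sup>2"
      and F="\<lambda>P i x. dST (m P i + x) l * (ST (m P i + x) l - (m P i + x))"])
  show bound: "\<bar>dST (m P i + x) l * (ST (m P i + x) l - (m P i + x))\<bar> \<le> l" for P i x
    using abs_dST_mult_ST_diff_le l by simp
  show "eventually (\<lambda>P. \<forall>i<P. (\<integral>x. (dST (m P i + x) l * (ST (m P i + x) l - (m P i + x)))\<^sup>2 \<partial>gauss \<sigma>)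
      \<le> l\<^sup>2) sequentially"
  proof (intro always_eventually allI impI)
    fix P i
    interpret prob_space "gauss \<sigma>" by (rule prob_space_gauss[OF \<sigma>])
    have "(dST (m P i + x) l * (ST (m P i + x) l - (m P i + x)))\<^sup>2 \<le> l\<^sup>2" for x
      using bound[of P i x] l by (simp add: abs_le_square_iff[symmetric])
    then show "(\<integral>x. (dST (m P i + x) l * (ST (m P i + x) l - (m P i + x)))\<^sup>2 \<partial>gauss \<sigma>) \<le> l\<^sup>2"
      by (intro integral_le_const AE_I2 integrable_gauss_bounded[OF \<sigma>, where B="l\<^sup>2"]) auto
  qed
  show "(\<lambda>P. l\<^sup>2 / real P) \<longlonglongrightarrow> 0"
    using tendsto_mult_left[OF lim_1_over_n, of "l\<^sup>2"] by simp
qed measurable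

lemma plim_zero_SUGAR_FD_error:
  "plim_zero (\<lambda>P. noise P \<sigma>)
     (\<lambda>P w. (SUGAR_FD P \<sigma> (\<lambda>i. m P i + w i) l (eps P) - deriv (\<lambda>t. risk P \<sigma> (m P) t) l) / real P)"
proof -
  define A where "A P i = (\<lambda>x. dST (m P i + x) l * (ST (m P i + x) l - (m P i + x)))" for P i
  let ?df_error = "\<lambda>P w. (grad_df_FD P (\<lambda>i. m P i + w i) l (eps P) - deriv (\<lambda>t. dof P \<sigma> (m P) t) l) / real P"
  have decomp: "(SUGAR_FD P \<sigma> (\<lambda>i. m P i + w i) l (eps P) - deriv (\<lambda>t. risk P \<sigma> (m P) t) l) / real P
      = 2 * ((\<Sum>i<P. A P i (w i) - integral\<^sup>L (gauss \<sigma>) (A P i)) / real P) + 2 * \<sigma>\<^sup>2 * ?df_error P w"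
    for P w
  proof -
    have "SUGAR_FD P \<sigma> (\<lambda>i. m P i + w i) l (eps P)
        = 2 * (\<Sum>i<P. A P i (w i)) + 2 * \<sigma>\<^sup>2 * grad_df_FD P (\<lambda>i. m P i + w i) l (eps P)"
      unfolding SUGAR_FD_def A_def by simp
    moreover have "deriv (\<lambda>t. risk P \<sigma> (m P) t) l
        = 2 * (\<Sum>i<P. integral\<^sup>L (gauss \<sigma>) (A P i)) + 2 * \<sigma>\<^sup>2 * deriv (\<lambda>t. dof P \<sigma> (m P) t) l"
      unfolding A_def by (rule deriv_risk[OF \<sigma> l])
    ultimately show ?thesis by (simp add: sum_subtractf divide_inverse algebra_simps)
  qed
  show ?thesis
    unfolding decomp
  proof (rule plim_zero_add[OF finite_measure_noise[OF \<sigma>]])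
    show "(\<lambda>w. 2 * ((\<Sum>i<P. A P i (w i) - integral\<^sup>L (gauss \<sigma>) (A P i)) / real P)) \<in> borel_measurable (noise P \<sigma>)"
      for P unfolding A_def noise_def by measurable
    show "(\<lambda>w. 2 * \<sigma>\<^sup>2 * ?df_error P w) \<in> borel_measurable (noise P \<sigma>)" for P
      unfolding grad_df_FD_def noise_def by measurable
  qed (simp_all only: A_def plim_zero_cmult plim_zero_SUGAR_term_fluctuation plim_zero_grad_df_FD_error)
qed

end

theorem theorem2:
  fixes \<sigma> :: real and N :: nat and z0 :: "nat \<Rightarrow> real"
    and \<Psi> :: "nat \<Rightarrow> nat \<Rightarrow> nat \<Rightarrow> real"
    and eps :: "nat \<Rightarrow> real" and l :: real
  assumes "\<sigma> > 0"
    and "\<forall>P>1. \<exists>j\<le>P. \<forall>i<P. \<forall>c<N. \<Psi> P i c = \<Psi> (Suc P) (if i < j then i else Suc i) c"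
    and "\<forall>P. eps P > 0"
    and "eps \<longlonglongrightarrow> 0"
    and "(\<lambda>P. 1 / (real P * eps P)) \<longlonglongrightarrow> 0"
    and "l > 0"
  shows "plim_zero (\<lambda>P. noise P \<sigma>)
           (\<lambda>P w. (SUGAR_FD P \<sigma> (\<lambda>i. mu0 \<Psi> N z0 P i + w i) l (eps P)
                    - deriv (\<lambda>t. risk P \<sigma> (mu0 \<Psi> N z0 P) t) l) / real P)
       \<and> plim_zero (\<lambda>P. noise P \<sigma>)
           (\<lambda>P w. (grad_df_FD P (\<lambda>i. mu0 \<Psi> N z0 P i + w i) l (eps P)
                    - deriv (\<lambda>t. dof P \<sigma> (mu0 \<Psi> N z0 P) t) l) / real P)"
  using plim_zero_SUGAR_FD_error[of \<sigma> eps l "mu0 \<Psi> N z0"] plim_zero_grad_df_FD_error[of \<sigma> eps l "mu0 \<Psi> N z0"]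
    assms(1,3-6) by blast

end
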